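(* Let $A\subseteq\mathcal{T}_n\setminus\mathcal{S}_n$. The following are equivalent: (1) $A$ is independent; (2) for all distinct $a,b\in A$ there is no $g\in\mathcal{S}_n$ such that $\ker(a)g\subseteq\ker(b)$.
   Context: $\Omega=\{1,\ldots,n\}$, $\mathcal{T}_n$ is the monoid of all maps $\Omega\to\Omega$, $\mathcal{S}_n$ the symmetric group. A set $A\subseteq\mathcal{T}_n\setminus\mathcal{S}_n$ is independent if for all distinct $a,b\in A$ we have $a\notin\langle b,\mathcal{S}_n\rangle$. $\ker(a)=\{(x,y)\in\Omega\times\Omega: xa=ya\}$, and for $g\in\mathcal{S}_n$, $\ker(a)g=\{(xg,yg):(x,y)\in\ker(a)\}$; inclusion is inclusion of relations. *)

theory Defs
  imports Main
begin

text \<open>Omega is modelled by a finite type 'a (n = CARD('a)).  T_n is the set of all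
maps 'a \<Rightarrow> 'a, S_n the bijections.  Maps act on the right: x(ab) = (xa)b,
so the product ab is the function composition b \<circ> a.\<close>

definition sym_grp :: "('a \<Rightarrow> 'a) set" where
  "sym_grp = {g. bij g}"

inductive_set gen_monoid :: "('a \<Rightarrow> 'a) set \<Rightarrow> ('a \<Rightarrow> 'a) set" for X where
  gen_id: "id \<in> gen_monoid X"
| gen_step: "f \<in> gen_monoid X \<Longrightarrow> g \<in> X \<Longrightarrow> g \<circ> f \<in> gen_monoid X"

definition ker :: "('a \<Rightarrow> 'a) \<Rightarrow> ('a \<times> 'a) set" where
  "ker a = {(x, y). a x = a y}"

definition rel_act :: "('a \<times> 'a) set \<Rightarrow> ('a \<Rightarrow> 'a) \<Rightarrow> ('a \<times> 'a) set" where
  "rel_act R g = {(g x, g y) | x y. (x, y) \<in> R}"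

definition independent :: "('a \<Rightarrow> 'a) set \<Rightarrow> bool" where
  "independent A \<longleftrightarrow> A \<subseteq> UNIV - sym_grp \<and>
     (\<forall>a\<in>A. \<forall>b\<in>A. a \<noteq> b \<longrightarrow> a \<notin> gen_monoid (insert b sym_grp))"

end

theory Submission
  imports Defs
begin

text \<open>For non-bijective \<open>a\<close>, \<open>b\<close> one has \<open>a \<in> \<langle>b, S\<^sub>n\<rangle>\<close> iff \<open>ker(b)g \<subseteq> ker(a)\<close> for some
  \<open>g \<in> S\<^sub>n\<close>, so both conditions say the same thing pair by pair.  Every non-permutation in
  \<open>\<langle>b, S\<^sub>n\<rangle>\<close> has the form \<open>p b F\<close> with \<open>p \<in> S\<^sub>n\<close>, whence \<open>ker(b)p\<^sup>-\<^sup>1 \<subseteq> ker(a)\<close>.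
  Conversely, \<open>e = g\<^sup>-\<^sup>1 b\<close> lies in \<open>\<langle>b, S\<^sub>n\<rangle>\<close> with \<open>ker(e) \<subseteq> ker(a)\<close>.  While the kernels
  differ, replace \<open>e\<close> by \<open>e \<sigma> b\<close>, where \<open>\<sigma> \<in> S\<^sub>n\<close> makes \<open>\<sigma> b\<close> glue exactly two
  \<open>ker(e)\<close>-classes that \<open>a\<close> glues; such \<open>\<sigma>\<close> exists because \<open>b\<close> is not injective and
  \<open>rank(e) \<le> rank(b)\<close>.  The rank drops each time, and once \<open>ker(e) = ker(a)\<close> we get
  \<open>a = e \<sigma>\<close> for a permutation \<open>\<sigma>\<close>.\<close>

lemma inj_on_extends_to_bij:
  fixes f :: "'a::finite \<Rightarrow> 'a"
  assumes "inj_on f A"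
  obtains \<sigma> where "bij \<sigma>" "\<forall>x\<in>A. \<sigma> x = f x"
proof -
  have "card (UNIV - A) = card (UNIV - f ` A)"
    using assms by (simp add: card_Diff_subset card_image)
  then obtain h where h: "bij_betw h (UNIV - A) (UNIV - f ` A)"
    using finite_same_card_bij[OF finite finite] by blast
  have "bij_betw (\<lambda>x. if x \<in> A then f x else h x) (A \<union> (UNIV - A)) (f ` A \<union> (UNIV - f ` A))"
    using assms by (intro bij_betw_disjoint_Un[OF _ h]) (auto simp: bij_betw_def)
  then show thesis by (intro that[of "\<lambda>x. if x \<in> A then f x else h x"]) auto
qed

lemma inj_on_into_with_value:
  assumes "finite A" "finite B" "card A \<le> card B" "x \<in> A" "y \<in> B"
  obtains f where "inj_on f A" "f ` A \<subseteq> B" "f x = y"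
proof -
  obtain f where "inj_on f (A - {x})" "f ` (A - {x}) \<subseteq> B - {y}"
    using card_le_inj[of "A - {x}" "B - {y}"] assms by (auto simp: diff_le_mono)
  then show thesis
    using assms(4,5) by (intro that[of "f(x := y)"]) (auto simp: inj_on_def)
qed

lemma not_inj_obtains_inv_ne:
  assumes "\<not> inj a"
  obtains p where "inv a (a p) \<noteq> p"
  using assms inj_on_inverseI[of UNIV "inv a" a] by auto

lemma bij_merging_two_points:
  fixes a :: "'a::finite \<Rightarrow> 'a" and S :: "'a set"
  assumes "\<not> inj a" "card S \<le> card (range a)" "u \<in> S" "v \<in> S" "u \<noteq> v"
  obtains \<sigma> where "bij \<sigma>" "a (\<sigma> u) = a (\<sigma> v)" "inj_on (a \<circ> \<sigma>) (S - {u})"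
proof -
  obtain p where p: "inv a (a p) \<noteq> p"
    using assms(1) by (rule not_inj_obtains_inv_ne)
  obtain \<iota> where \<iota>: "inj_on \<iota> (S - {u})" "\<iota> ` (S - {u}) \<subseteq> range a" "\<iota> v = a p"
    by (rule inj_on_into_with_value[of "S - {u}" "range a" v "a p"]) (use assms(2-5) in auto)
  text \<open>\<open>\<tau>\<close> sends \<open>S - {u}\<close> into the transversal \<open>inv a ` range a\<close> of \<open>ker a\<close>,
    and \<open>u\<close> to \<open>p\<close>, which lies in the class of \<open>\<tau> v\<close> but is not its representative.\<close>
  define \<tau> where "\<tau> z = (if z = u then p else inv a (\<iota> z))" for z
  have a_\<tau>: "a (\<tau> z) = \<iota> z" if "z \<in> S - {u}" for z
    using \<iota>(2) that by (auto simp: \<tau>_def f_inv_into_f)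
  have "inj_on (inv a) (range a)"
    by (rule inj_on_inv_into) simp
  then have "inj_on (inv a \<circ> \<iota>) (S - {u})"
    using \<iota>(1,2) by (blast intro: comp_inj_on inj_on_subset)
  then have "inj_on \<tau> (S - {u})"
    by (rule inj_on_cong[THEN iffD1, rotated]) (simp add: \<tau>_def)
  moreover have "p \<notin> \<tau> ` (S - {u})"
    using p \<iota>(2) by (auto simp: \<tau>_def f_inv_into_f)
  ultimately have "inj_on \<tau> S"
    using assms(3) inj_on_insert[of \<tau> u "S - {u}"] by (simp add: \<tau>_def insert_absorb)
  then obtain \<sigma> where \<sigma>: "bij \<sigma>" "\<forall>z\<in>S. \<sigma> z = \<tau> z"
    by (rule inj_on_extends_to_bij)
  show thesis
  proof
    show "a (\<sigma> u) = a (\<sigma> v)"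
      using \<sigma>(2) a_\<tau>[of v] assms(3-5) \<iota>(3) by (simp add: \<tau>_def)
    show "inj_on (a \<circ> \<sigma>) (S - {u})"
      using \<iota>(1) \<sigma>(2) a_\<tau> by (auto simp: inj_on_def)
  qed (fact \<sigma>(1))
qed

lemma bij_factor_if_ker_eq:
  fixes e b :: "'a::finite \<Rightarrow> 'a"
  assumes "ker e = ker b"
  obtains \<sigma> where "bij \<sigma>" "b = \<sigma> \<circ> e"
proof -
  have e_b: "e x = e y \<longleftrightarrow> b x = b y" for x y
    using assms by (auto simp: ker_def set_eq_iff)
  have factor: "b (inv e z) = b x" if "z = e x" for x z
    using e_b[of "inv e z" x] that by (simp add: f_inv_into_f)
  have "inj_on (b \<circ> inv e) (range e)"
    by (rule inj_onI) (auto simp: factor e_b)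
  then obtain \<sigma> where "bij \<sigma>" "\<forall>z\<in>range e. \<sigma> z = (b \<circ> inv e) z"
    by (rule inj_on_extends_to_bij)
  then show thesis by (intro that[of \<sigma>]) (auto simp: factor)
qed

lemma card_range_comp_less:
  fixes e :: "'a \<Rightarrow> 'b::finite"
  assumes "h (e x) = h (e y)" and "e x \<noteq> e y"
  shows "card (range (h \<circ> e)) < card (range e)"
proof -
  have "\<not> inj_on h (range e)"
    using assms by (auto simp: inj_on_def)
  then have "card (h ` range e) \<noteq> card (range e)"
    by (simp add: inj_on_iff_eq_card)
  moreover have "card (h ` range e) \<le> card (range e)"
    by (rule card_image_le) simp
  ultimately show ?thesis
    by (simp add: image_comp)
qed

lemma ker_comp_subset_if_merging:
  assumes merge: "h (e x) = h (e y)" and "e x \<noteq> e y"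
    and inj: "inj_on h (range e - {e x})" and "ker e \<subseteq> ker b" and "b x = b y"
  shows "ker (h \<circ> e) \<subseteq> ker b"
proof (rule subrelI)
  fix z w
  assume "(z, w) \<in> ker (h \<circ> e)"
  then have hzw: "h (e z) = h (e w)"
    by (simp add: ker_def)
  have b_e: "b z' = b w'" if "e z' = e w'" for z' w'
    using assms(4) that unfolding ker_def by blast
  have merged: "b z' = b x" if "h (e z') = h (e x)" for z'
  proof (cases "e z' = e x")
    case True
    then show ?thesis by (rule b_e)
  next
    case False
    have "h (e z') = h (e y)"
      using that merge by simp
    then have "e z' = e y"
      by (rule inj_onD[OF inj]) (use False assms(2) in auto)
    then show ?thesis
      using b_e[of z' y] assms(5) by simp
  qed
  show "(z, w) \<in> ker b"
  proof (cases "h (e z) = h (e x)")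
    case True
    with hzw have "b z = b x" "b w = b x"
      using merged[of z] merged[of w] by simp_all
    then show ?thesis
      by (simp add: ker_def)
  next
    case False
    with hzw have "e z \<in> range e - {e x}" "e w \<in> range e - {e x}"
      by auto
    then have "e z = e w"
      by (rule inj_onD[OF inj hzw])
    then show ?thesis
      using b_e[of z w] by (simp add: ker_def)
  qed
qed

lemma gen_monoid_if_ker_subset:
  fixes a b e :: "'a::finite \<Rightarrow> 'a"
  assumes "\<not> inj b" and "e \<in> gen_monoid (insert b sym_grp)"
    and "card (range e) \<le> card (range b)" and "ker e \<subseteq> ker a"
  shows "a \<in> gen_monoid (insert b sym_grp)"
  using assms(2-4)
proof (induction "card (range e)" arbitrary: e rule: less_induct)
  case less
  show ?case
  proof (cases "ker a \<subseteq> ker e")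
    case True
    then obtain \<sigma> where "bij \<sigma>" "a = \<sigma> \<circ> e"
      using less.prems(3) bij_factor_if_ker_eq[of e a] by auto
    then show ?thesis
      using less.prems(1) by (auto intro: gen_step simp: sym_grp_def)
  next
    case False
    then obtain x y where xy: "a x = a y" "e x \<noteq> e y"
      by (auto simp: ker_def)
    obtain \<sigma> where \<sigma>: "bij \<sigma>" "b (\<sigma> (e x)) = b (\<sigma> (e y))"
        "inj_on (b \<circ> \<sigma>) (range e - {e x})"
      using bij_merging_two_points[OF assms(1) less.prems(2)] xy(2) by blast
    have "card (range ((b \<circ> \<sigma>) \<circ> e)) < card (range e)"
      by (rule card_range_comp_less[where x = x and y = y]) (use \<sigma>(2) xy(2) in auto)
    moreover have "(b \<circ> \<sigma>) \<circ> e \<in> gen_monoid (insert b sym_grp)"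
      unfolding comp_assoc using less.prems(1) \<sigma>(1)
      by (intro gen_step) (auto simp: sym_grp_def)
    moreover have "card (range ((b \<circ> \<sigma>) \<circ> e)) \<le> card (range b)"
      by (rule card_mono) auto
    moreover have "ker ((b \<circ> \<sigma>) \<circ> e) \<subseteq> ker a"
      by (rule ker_comp_subset_if_merging[where x = x and y = y])
        (use \<sigma>(2,3) xy less.prems(3) in auto)
    ultimately show ?thesis
      by (rule less.hyps)
  qed
qed

lemma rel_act_ker:
  assumes "bij g"
  shows "rel_act (ker a) g = ker (a \<circ> inv g)"
proof -
  have "(x, y) \<in> rel_act (ker a) g \<longleftrightarrow> (inv g x, inv g y) \<in> ker a" for x y
    using assms unfolding rel_act_def
    by (auto simp: bij_is_inj inv_f_f) (metis bij_inv_eq_iff)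
  then show ?thesis by (auto simp: ker_def)
qed

lemma gen_monoid_insert_sym_grp_cases:
  assumes "f \<in> gen_monoid (insert b sym_grp)"
  shows "bij f \<or> (\<exists>F p. bij p \<and> f = F \<circ> b \<circ> p)"
  using assms
proof (induction rule: gen_monoid.induct)
  case gen_id
  show ?case by (rule disjI1) (rule bij_id)
next
  case (gen_step f g)
  from gen_step.IH show ?case
  proof
    assume f: "bij f"
    show ?case
    proof (cases "g = b")
      case True
      then have "g \<circ> f = id \<circ> b \<circ> f" by simp
      with f show ?thesis by blast
    next
      case False
      with gen_step.hyps(2) have "bij g"
        by (simp add: sym_grp_def)
      with f show ?thesis
        using bij_comp by blast
    qed
  next
    assume "\<exists>F p. bij p \<and> f = F \<circ> b \<circ> p"
    then obtain F p where "bij p" "f = F \<circ> b \<circ> p" by blast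
    then have "bij p \<and> g \<circ> f = (g \<circ> F) \<circ> b \<circ> p" by (simp add: comp_assoc)
    then show ?case by blast
  qed
qed

lemma gen_monoid_insert_sym_grp_iff:
  fixes a b :: "'a::finite \<Rightarrow> 'a"
  assumes "\<not> bij a" and "\<not> bij b"
  shows "a \<in> gen_monoid (insert b sym_grp) \<longleftrightarrow> (\<exists>g\<in>sym_grp. rel_act (ker b) g \<subseteq> ker a)"
proof
  assume "a \<in> gen_monoid (insert b sym_grp)"
  then obtain F p where p: "bij p" "a = F \<circ> b \<circ> p"
    using assms(1) gen_monoid_insert_sym_grp_cases by blast
  then have "rel_act (ker b) (inv p) = ker (b \<circ> p)"
    by (simp add: rel_act_ker bij_imp_bij_inv inv_inv_eq)
  also have "\<dots> \<subseteq> ker a"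
    using p(2) by (auto simp: ker_def)
  finally have "rel_act (ker b) (inv p) \<subseteq> ker a" .
  moreover have "inv p \<in> sym_grp"
    using p(1) by (simp add: sym_grp_def bij_imp_bij_inv)
  ultimately show "\<exists>g\<in>sym_grp. rel_act (ker b) g \<subseteq> ker a"
    by blast
next
  assume "\<exists>g\<in>sym_grp. rel_act (ker b) g \<subseteq> ker a"
  then obtain g where g: "bij g" "ker (b \<circ> inv g) \<subseteq> ker a"
    by (auto simp: sym_grp_def rel_act_ker)
  have "\<not> inj b"
    using assms(2) finite_UNIV_inj_surj[of b] by (auto simp: bij_def)
  moreover have "b \<circ> inv g \<in> gen_monoid (insert b sym_grp)"
    using g(1) gen_step[OF gen_step[OF gen_id], of "inv g" _ b]
    by (simp add: sym_grp_def bij_imp_bij_inv)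
  moreover have "card (range (b \<circ> inv g)) \<le> card (range b)"
    by (rule card_mono) auto
  ultimately show "a \<in> gen_monoid (insert b sym_grp)"
    using g(2) by (rule gen_monoid_if_ker_subset)
qed

theorem lemma8p3:
  fixes A :: "('a::finite \<Rightarrow> 'a) set"
  assumes "A \<subseteq> UNIV - sym_grp"
  shows "independent A \<longleftrightarrow>
    (\<forall>a\<in>A. \<forall>b\<in>A. a \<noteq> b \<longrightarrow> \<not> (\<exists>g\<in>sym_grp. rel_act (ker a) g \<subseteq> ker b))"
proof -
  have non_bij: "\<not> bij a" if "a \<in> A" for a
    using assms that by (auto simp: sym_grp_def)
  have "independent A \<longleftrightarrow>
    (\<forall>a\<in>A. \<forall>b\<in>A. a \<noteq> b \<longrightarrow> \<not> (\<exists>g\<in>sym_grp. rel_act (ker b) g \<subseteq> ker a))"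
    using assms gen_monoid_insert_sym_grp_iff[OF non_bij non_bij]
    by (simp add: independent_def)
  also have "\<dots> \<longleftrightarrow>
    (\<forall>a\<in>A. \<forall>b\<in>A. a \<noteq> b \<longrightarrow> \<not> (\<exists>g\<in>sym_grp. rel_act (ker a) g \<subseteq> ker b))"
    by (intro iffI ballI impI) (simp_all add: eq_commute)
  finally show ?thesis .
qed

end
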